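(* Let $G$ be a connected graph of order $n$, and let $g$ be a non-negative integer with $0\leq g\leq \min\left\{\Delta(G),\left\lfloor \frac{n-3}{2}\right\rfloor\right\}$, such that $G$ has a $g$-good-neighbor cut. Then $$\kappa(G)\leq \kappa^g(G)\leq n-2g-2.$$ Moreover, the upper and lower bounds are sharp (each is attained with equality by some such graph and $g$).
   Context: For a connected graph $G=(V,E)$ and integer $g\ge0$: a set $F\subseteq V$ is a $g$-good-neighbor faulty set if $|N(v)\cap (V-F)|\geq g$ for every $v\in V-F$; a $g$-good-neighbor cut is such an $F$ with $G-F$ disconnected; $\kappa^g(G)$ is the minimum cardinality of a $g$-good-neighbor cut. $\kappa(G)$ is the usual vertex connectivity, $\Delta(G)$ the maximum degree. *)

theory Defs
  imports Main
begin

definition simple_graph :: "'a set \<Rightarrow> ('a \<Rightarrow> 'a \<Rightarrow> bool) \<Rightarrow> bool" where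
  "simple_graph V E \<longleftrightarrow> finite V \<and> (\<forall>u v. E u v \<longrightarrow> u \<in> V \<and> v \<in> V)
     \<and> (\<forall>u v. E u v \<longrightarrow> E v u) \<and> (\<forall>v. \<not> E v v)"

definition reach_in :: "('a \<Rightarrow> 'a \<Rightarrow> bool) \<Rightarrow> 'a set \<Rightarrow> 'a \<Rightarrow> 'a \<Rightarrow> bool" where
  "reach_in E U u v \<longleftrightarrow> u \<in> U \<and> v \<in> U \<and> (\<lambda>x y. E x y \<and> x \<in> U \<and> y \<in> U)\<^sup>*\<^sup>* u v"

definition connected_on :: "('a \<Rightarrow> 'a \<Rightarrow> bool) \<Rightarrow> 'a set \<Rightarrow> bool" where
  "connected_on E U \<longleftrightarrow> U \<noteq> {} \<and> (\<forall>u\<in>U. \<forall>v\<in>U. reach_in E U u v)"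

definition disconnected_on :: "('a \<Rightarrow> 'a \<Rightarrow> bool) \<Rightarrow> 'a set \<Rightarrow> bool" where
  "disconnected_on E U \<longleftrightarrow> (\<exists>u\<in>U. \<exists>v\<in>U. \<not> reach_in E U u v)"

definition nbhd :: "'a set \<Rightarrow> ('a \<Rightarrow> 'a \<Rightarrow> bool) \<Rightarrow> 'a \<Rightarrow> 'a set" where
  "nbhd V E v = {u \<in> V. E v u}"

definition max_degree :: "'a set \<Rightarrow> ('a \<Rightarrow> 'a \<Rightarrow> bool) \<Rightarrow> nat" where
  "max_degree V E = Max ((\<lambda>v. card (nbhd V E v)) ` V)"

text \<open>Vertex connectivity: minimum size of S \<subseteq> V such that G - S is disconnected
  or has at most one vertex (so \<kappa>(K_n) = n - 1).\<close>
definition vertex_connectivity :: "'a set \<Rightarrow> ('a \<Rightarrow> 'a \<Rightarrow> bool) \<Rightarrow> nat" where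
  "vertex_connectivity V E =
     Min {card S | S. S \<subseteq> V \<and> (disconnected_on E (V - S) \<or> card (V - S) \<le> 1)}"

definition good_neighbor_faulty :: "'a set \<Rightarrow> ('a \<Rightarrow> 'a \<Rightarrow> bool) \<Rightarrow> nat \<Rightarrow> 'a set \<Rightarrow> bool" where
  "good_neighbor_faulty V E g F \<longleftrightarrow> F \<subseteq> V \<and>
     (\<forall>v \<in> V - F. card (nbhd V E v \<inter> (V - F)) \<ge> g)"

definition good_neighbor_cut :: "'a set \<Rightarrow> ('a \<Rightarrow> 'a \<Rightarrow> bool) \<Rightarrow> nat \<Rightarrow> 'a set \<Rightarrow> bool" where
  "good_neighbor_cut V E g F \<longleftrightarrow> good_neighbor_faulty V E g F \<and> disconnected_on E (V - F)"

definition good_neighbor_connectivity :: "'a set \<Rightarrow> ('a \<Rightarrow> 'a \<Rightarrow> bool) \<Rightarrow> nat \<Rightarrow> nat" where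
  "good_neighbor_connectivity V E g = Min {card F | F. good_neighbor_cut V E g F}"

definition prop21_hyps :: "'a set \<Rightarrow> ('a \<Rightarrow> 'a \<Rightarrow> bool) \<Rightarrow> nat \<Rightarrow> bool" where
  "prop21_hyps V E g \<longleftrightarrow> simple_graph V E \<and> connected_on E V \<and>
     g \<le> max_degree V E \<and> int g \<le> (int (card V) - 3) div 2 \<and>
     (\<exists>F. good_neighbor_cut V E g F)"

end

theory Submission
  imports Defs
begin

text \<open>If F is a g-good-neighbor cut, pick vertices u, v of V - F lying in different
  components of G - F. Their closed neighbourhoods inside V - F are disjoint and each has
  at least g + 1 vertices, so card (V - F) \<ge> 2g + 2, i.e. card F \<le> n - 2g - 2. The lower
  bound \<kappa> \<le> \<kappa>^g holds because every g-good-neighbor cut is a vertex cut. Both bounds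
  are attained by the path on three vertices with g = 0, where \<kappa> = \<kappa>^0 = 1 = 3 - 0 - 2.\<close>

lemma finite_card_image_subsets:
  assumes "finite V"
  shows "finite {card S | S. S \<subseteq> V \<and> P S}"
proof -
  have "{card S | S. S \<subseteq> V \<and> P S} \<subseteq> card ` Pow V" by blast
  then show ?thesis using assms by (meson finite_Pow_iff finite_imageI finite_subset)
qed

lemma card_closed_nbhd_within:
  assumes "finite U" and "\<not> E u u"
  shows "card (insert u (nbhd V E u \<inter> U)) = card (nbhd V E u \<inter> U) + 1"
  using assms by (simp add: nbhd_def)

lemma closed_nbhds_within_disjoint:
  assumes sym: "\<And>x y. E x y \<Longrightarrow> E y x"
    and "u \<in> U" "v \<in> U" and not_reach: "\<not> reach_in E U u v"
  shows "insert u (nbhd V E u \<inter> U) \<inter> insert v (nbhd V E v \<inter> U) = {}"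
proof (rule ccontr)
  let ?R = "\<lambda>x y. E x y \<and> x \<in> U \<and> y \<in> U"
  assume "insert u (nbhd V E u \<inter> U) \<inter> insert v (nbhd V E v \<inter> U) \<noteq> {}"
  then obtain w where wu: "w \<in> insert u (nbhd V E u \<inter> U)" and wv: "w \<in> insert v (nbhd V E v \<inter> U)"
    by blast
  have "?R\<^sup>*\<^sup>* u w" using wu \<open>u \<in> U\<close> by (auto simp: nbhd_def)
  moreover have "?R\<^sup>*\<^sup>* w v" using wv \<open>v \<in> U\<close> sym by (auto simp: nbhd_def)
  ultimately have "?R\<^sup>*\<^sup>* u v" by (rule rtranclp_trans)
  then show False using not_reach \<open>u \<in> U\<close> \<open>v \<in> U\<close> by (simp add: reach_in_def)
qed

lemma card_good_neighbor_cut_le: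
  assumes sg: "simple_graph V E" and cut: "good_neighbor_cut V E g F"
  shows "card F + 2 * g + 2 \<le> card V"
proof -
  let ?U = "V - F"
  have finV: "finite V" and sym: "\<And>x y. E x y \<Longrightarrow> E y x" and irr: "\<And>x. \<not> E x x"
    using sg by (auto simp: simple_graph_def)
  have FV: "F \<subseteq> V" and deg: "\<And>x. x \<in> ?U \<Longrightarrow> g \<le> card (nbhd V E x \<inter> ?U)"
    using cut by (auto simp: good_neighbor_cut_def good_neighbor_faulty_def)
  obtain u v where u: "u \<in> ?U" and v: "v \<in> ?U" and not_reach: "\<not> reach_in E ?U u v"
    using cut by (auto simp: good_neighbor_cut_def disconnected_on_def)
  define A where "A = insert u (nbhd V E u \<inter> ?U)"
  define B where "B = insert v (nbhd V E v \<inter> ?U)"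
  have finU: "finite ?U" using finV by simp
  have AU: "A \<subseteq> ?U" and BU: "B \<subseteq> ?U" using u v by (auto simp: A_def B_def)
  have "g + 1 \<le> card A" "g + 1 \<le> card B"
    using card_closed_nbhd_within[of ?U E _ V, OF finU irr] deg u v by (simp_all add: A_def B_def)
  moreover have "A \<inter> B = {}"
    unfolding A_def B_def using closed_nbhds_within_disjoint[OF sym u v not_reach] .
  then have "card A + card B \<le> card ?U"
    using finU AU BU by (metis card_Un_disjoint card_mono finite_subset Un_least)
  moreover have "card ?U + card F = card V"
    using FV finV by (metis card_Diff_subset card_mono finite_subset le_add_diff_inverse2)
  ultimately show ?thesis by linarith
qed

lemma good_neighbor_connectivity_attained:
  assumes "finite V" and "\<exists>F. good_neighbor_cut V E g F"
  obtains F where "good_neighbor_cut V E g F" "card F = good_neighbor_connectivity V E g"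
proof -
  have "{card F | F. good_neighbor_cut V E g F}
      = {card F | F. F \<subseteq> V \<and> good_neighbor_cut V E g F}"
    by (auto simp: good_neighbor_cut_def good_neighbor_faulty_def)
  then have "finite {card F | F. good_neighbor_cut V E g F}"
    using finite_card_image_subsets[OF \<open>finite V\<close>] by simp
  then have "good_neighbor_connectivity V E g \<in> {card F | F. good_neighbor_cut V E g F}"
    unfolding good_neighbor_connectivity_def using assms(2) by (intro Min_in) auto
  then show ?thesis using that by auto
qed

lemma vertex_connectivity_le_card:
  assumes "finite V" and "S \<subseteq> V" and "disconnected_on E (V - S) \<or> card (V - S) \<le> 1"
  shows "vertex_connectivity V E \<le> card S"
  unfolding vertex_connectivity_def
  using assms by (intro Min_le finite_card_image_subsets) auto

lemma vertex_connectivity_pos: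
  assumes "finite V" and "connected_on E V" and "2 \<le> card V"
  shows "1 \<le> vertex_connectivity V E"
proof -
  have "vertex_connectivity V E \<in> {card S | S. S \<subseteq> V \<and> (disconnected_on E (V - S) \<or> card (V - S) \<le> 1)}"
    unfolding vertex_connectivity_def
    by (intro Min_in finite_card_image_subsets[OF \<open>finite V\<close>]) auto
  then obtain S where "S \<subseteq> V" "disconnected_on E (V - S) \<or> card (V - S) \<le> 1"
    and "vertex_connectivity V E = card S" by blast
  moreover have "S \<noteq> {}"
    using assms(2,3) calculation(2) by (auto simp: connected_on_def disconnected_on_def)
  ultimately show ?thesis using \<open>finite V\<close> by (simp add: Suc_leI card_gt_0_iff finite_subset)
qed

lemma good_neighbor_connectivity_bounds:
  assumes "prop21_hyps V E g"
  shows "vertex_connectivity V E \<le> good_neighbor_connectivity V E g"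
    and "good_neighbor_connectivity V E g + 2 * g + 2 \<le> card V"
proof -
  have sg: "simple_graph V E" and finV: "finite V" and ex: "\<exists>F. good_neighbor_cut V E g F"
    using assms by (auto simp: prop21_hyps_def simple_graph_def)
  obtain F where F: "good_neighbor_cut V E g F" and cF: "card F = good_neighbor_connectivity V E g"
    using good_neighbor_connectivity_attained[OF finV ex] .
  have "vertex_connectivity V E \<le> card F"
    using F finV by (intro vertex_connectivity_le_card)
      (auto simp: good_neighbor_cut_def good_neighbor_faulty_def)
  then show "vertex_connectivity V E \<le> good_neighbor_connectivity V E g" using cF by simp
  show "good_neighbor_connectivity V E g + 2 * g + 2 \<le> card V"
    using card_good_neighbor_cut_le[OF sg F] cF by simp
qed

definition path3 :: "nat \<Rightarrow> nat \<Rightarrow> bool" where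
  "path3 x y \<longleftrightarrow> (x = 0 \<and> y = 1) \<or> (x = 1 \<and> y = 0) \<or> (x = 1 \<and> y = 2) \<or> (x = 2 \<and> y = 1)"

lemma connected_on_path3: "connected_on path3 {0, 1, 2}"
proof -
  let ?R = "\<lambda>x y. path3 x y \<and> x \<in> {0::nat, 1, 2} \<and> y \<in> {0, 1, 2}"
  have "?R\<^sup>*\<^sup>* 0 1" "?R\<^sup>*\<^sup>* 1 0" "?R\<^sup>*\<^sup>* 1 2" "?R\<^sup>*\<^sup>* 2 1"
    by (auto intro: r_into_rtranclp simp: path3_def)
  moreover from this have "?R\<^sup>*\<^sup>* 0 2" "?R\<^sup>*\<^sup>* 2 0" by (meson rtranclp_trans)+
  ultimately show ?thesis by (auto simp: connected_on_def reach_in_def)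
qed

lemma good_neighbor_cut_path3: "good_neighbor_cut {0, 1, 2} path3 0 {1}"
proof -
  have "\<not> (\<lambda>x y. path3 x y \<and> x \<in> {0::nat, 1, 2} - {1} \<and> y \<in> {0, 1, 2} - {1})\<^sup>*\<^sup>* 0 2"
  proof
    assume "(\<lambda>x y. path3 x y \<and> x \<in> {0::nat, 1, 2} - {1} \<and> y \<in> {0, 1, 2} - {1})\<^sup>*\<^sup>* 0 2"
    then show False by (cases rule: converse_rtranclpE) (auto simp: path3_def)
  qed
  then have "disconnected_on path3 ({0, 1, 2} - {1})"
    unfolding disconnected_on_def reach_in_def by (intro bexI[of _ 0] bexI[of _ 2]) auto
  then show ?thesis by (simp add: good_neighbor_cut_def good_neighbor_faulty_def)
qed

lemma prop21_hyps_path3: "prop21_hyps {0, 1, 2} path3 0"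
  using connected_on_path3 good_neighbor_cut_path3
  by (auto simp: prop21_hyps_def simple_graph_def path3_def)

lemma connectivities_path3:
  "vertex_connectivity {0, 1, 2} path3 = 1" "good_neighbor_connectivity {0, 1, 2} path3 0 = 1"
proof -
  have "1 \<le> vertex_connectivity {0::nat, 1, 2} path3"
    using connected_on_path3 by (intro vertex_connectivity_pos) auto
  then show "vertex_connectivity {0, 1, 2} path3 = 1" "good_neighbor_connectivity {0, 1, 2} path3 0 = 1"
    using good_neighbor_connectivity_bounds[OF prop21_hyps_path3] by auto
qed

theorem proposition2p1:
  shows "(\<forall>(V :: 'a set) E g. prop21_hyps V E g \<longrightarrow>
            vertex_connectivity V E \<le> good_neighbor_connectivity V E g \<and>
            int (good_neighbor_connectivity V E g) \<le> int (card V) - 2 * int g - 2)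
       \<and> (\<exists>(V :: nat set) E g. prop21_hyps V E g \<and>
            vertex_connectivity V E = good_neighbor_connectivity V E g)
       \<and> (\<exists>(V :: nat set) E g. prop21_hyps V E g \<and>
            int (good_neighbor_connectivity V E g) = int (card V) - 2 * int g - 2)"
proof (intro conjI)
  show "\<forall>(V :: 'a set) E g. prop21_hyps V E g \<longrightarrow>
          vertex_connectivity V E \<le> good_neighbor_connectivity V E g \<and>
          int (good_neighbor_connectivity V E g) \<le> int (card V) - 2 * int g - 2"
    using good_neighbor_connectivity_bounds by fastforce
  show "\<exists>(V :: nat set) E g. prop21_hyps V E g \<and>
          vertex_connectivity V E = good_neighbor_connectivity V E g"
    using prop21_hyps_path3 connectivities_path3 by metis
  show "\<exists>(V :: nat set) E g. prop21_hyps V E g \<and>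
          int (good_neighbor_connectivity V E g) = int (card V) - 2 * int g - 2"
    using prop21_hyps_path3 connectivities_path3
    by (intro exI[of _ "{0, 1, 2}"] exI[of _ path3] exI[of _ 0]) simp
qed

end
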